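(* Let $b\ge3$ be an integer and $D \subset \{0,\ldots,b-1\}$ with $2\le\#D\le b-1$; let $C(b,D)$ be the corresponding generalized Cantor set with Hausdorff dimension $\gamma=\log\#D/\log b$, and let $m = \min\{ \min D, b-1-\max D \}$. Let $A=(a_{n})_{n \geq 1}$ be an unbounded non-decreasing sequence of positive integers, let $f$ be a dimension function such that $r\mapsto r^{-\gamma} f(r)$ is monotonic, and let $\psi : \mathbb{N} \to (0,\infty)$. If $$\sum_{i \in I \colon \psi_{A}(i) > \frac{m}{(b-1) b^{ i }}} f\left(\psi_{A}(i) - \frac{m}{(b-1) b^{i}}\right) b^{i \gamma } < \infty,$$ then $\mathcal{H}^{f} (W_{b,A}(\psi) \cap C(b,D))= 0$.
   Context: $C(b,D)$ is the set of $x \in [0,1]$ whose base-$b$ expansion uses only digits from $D$. A dimension function is a continuous, non-decreasing $f:(0,\infty)\to(0,\infty)$ with $\lim_{r\to0}f(r)=0$; $\mathcal{H}^f$ is the Hausdorff $f$-measure. $W_{b,A}(\psi) = \{x \in [0,1] : |x - p/b^{a_n}| < \psi(n) \text{ for infinitely many } (p,n) \in \mathbb{N}^2\}$; $I = \{i\in\mathbb{N} : a_n = i \text{ for some } n\}$; for $i\in I$, $\psi_A(i) = \max\{\psi(n) : a_n = i\}$. *)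

theory Defs
  imports "HOL-Analysis.Analysis"
begin

definition cantor_set :: "nat \<Rightarrow> nat set \<Rightarrow> real set" where
  "cantor_set b D = {x \<in> {0..1}. \<exists>d :: nat \<Rightarrow> nat. (\<forall>k. d k \<in> D) \<and>
       (\<lambda>k. real (d k) / real b ^ Suc k) sums x}"

definition dimension_function :: "(real \<Rightarrow> real) \<Rightarrow> bool" where
  "dimension_function f \<longleftrightarrow> continuous_on {0<..} f \<and> mono_on {0<..} f \<and>
     (\<forall>r>0. f r > 0) \<and> (f \<longlongrightarrow> 0) (at_right 0)"

text \<open>Gauge of a set in a cover: f(diam U), with the usual convention that sets of
  diameter 0 (empty set, singletons) contribute f(0) = lim_{r->0} f(r) = 0.\<close>
definition hgauge :: "(real \<Rightarrow> real) \<Rightarrow> real set \<Rightarrow> ennreal" where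
  "hgauge f U = (if diameter U > 0 then ennreal (f (diameter U)) else 0)"

definition hausdorff_content :: "(real \<Rightarrow> real) \<Rightarrow> real \<Rightarrow> real set \<Rightarrow> ennreal" where
  "hausdorff_content f \<delta> E = (INF U \<in> {U :: nat \<Rightarrow> real set.
       E \<subseteq> (\<Union>i. U i) \<and> (\<forall>i. bounded (U i) \<and> diameter (U i) \<le> \<delta>)}.
       (\<Sum>i. hgauge f (U i)))"

definition hausdorff_measure :: "(real \<Rightarrow> real) \<Rightarrow> real set \<Rightarrow> ennreal" where
  "hausdorff_measure f E = (SUP \<delta> \<in> {0<..}. hausdorff_content f \<delta> E)"

definition W_set :: "nat \<Rightarrow> (nat \<Rightarrow> nat) \<Rightarrow> (nat \<Rightarrow> real) \<Rightarrow> real set" where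
  "W_set b a \<psi> = {x \<in> {0..1}. infinite {(p :: nat, n :: nat). p \<ge> 1 \<and> n \<ge> 1 \<and>
       \<bar>x - real p / real b ^ a n\<bar> < \<psi> n}}"

definition index_set :: "(nat \<Rightarrow> nat) \<Rightarrow> nat set" where
  "index_set a = {i. \<exists>n\<ge>1. a n = i}"

definition psi_A :: "(nat \<Rightarrow> nat) \<Rightarrow> (nat \<Rightarrow> real) \<Rightarrow> nat \<Rightarrow> real" where
  "psi_A a \<psi> i = Max {\<psi> n | n. n \<ge> 1 \<and> a n = i}"

end

theory Submission
  imports Defs
begin

(* The first i digits of a point x of C(b,D) form an integer q
   with b^i x - q in [m/(b-1), 1 - m/(b-1)], so x keeps distance m/((b-1) b^i) from the grid b^-i Z.
   If x is moreover within psi_A(i) of that grid, it lies in one of 2 #D^i intervals of length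
   psi_A(i) - m/((b-1) b^i) next to q/b^i or (q+1)/b^i. Every point of W \<inter> C is caught in this
   way at infinitely many levels i, and #D^i = b^(i gamma), so the hypothesis says exactly that the
   f-costs of these covers are summable; the Hausdorff-Cantelli lemma then gives H^f(W \<inter> C) = 0. *)

lemma hgauge_le_of_diameter_le:
  assumes f: "mono_on {0<..} f" and "0 < r" "diameter B \<le> r"
  shows "hgauge f B \<le> ennreal (f r)"
proof (cases "0 < diameter B")
  case True
  then have "f (diameter B) \<le> f r"
    using assms by (intro mono_onD[OF f]) auto
  then show ?thesis
    using True by (simp add: hgauge_def ennreal_leI)
qed (simp add: hgauge_def)

lemma hausdorff_content_le_tail_sum:
  fixes B :: "nat \<Rightarrow> real set"
  assumes bounded: "\<And>n. bounded (B n)"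
    and small: "\<And>n. N \<le> n \<Longrightarrow> diameter (B n) \<le> \<delta>"
    and covered: "\<And>x. x \<in> E \<Longrightarrow> infinite {n. x \<in> B n}"
  shows "hausdorff_content f \<delta> E \<le> (\<Sum>k. hgauge f (B (k + N)))"
proof -
  have "E \<subseteq> (\<Union>k. B (k + N))"
  proof
    fix x assume "x \<in> E"
    then obtain n where "N \<le> n" "x \<in> B n"
      using covered unfolding infinite_nat_iff_unbounded_le by blast
    then show "x \<in> (\<Union>k. B (k + N))"
      by (intro UN_I[of "n - N"]) auto
  qed
  then show ?thesis
    unfolding hausdorff_content_def using bounded small
    by (intro INF_lower2[of "\<lambda>k. B (k + N)"]) auto
qed

lemma tendsto_suminf_tail:
  fixes h :: "nat \<Rightarrow> real"
  assumes "summable h"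
  shows "(\<lambda>N. \<Sum>k. h (k + N)) \<longlonglongrightarrow> 0"
proof -
  have "(\<lambda>N. suminf h - (\<Sum>k<N. h k)) \<longlonglongrightarrow> suminf h - suminf h"
    using summable_LIMSEQ[OF assms] by (intro tendsto_diff tendsto_const)
  then show ?thesis
    using suminf_minus_initial_segment[OF assms] by simp
qed

lemma hausdorff_measure_zero_if_infinitely_covered:
  fixes B :: "nat \<Rightarrow> real set"
  assumes f_mono: "mono_on {0<..} f" and f_pos: "\<And>r. 0 < r \<Longrightarrow> 0 < f r"
    and bounded: "\<And>n. bounded (B n)" and finite_sum: "(\<Sum>n. hgauge f (B n)) < \<infinity>"
    and covered: "\<And>x. x \<in> E \<Longrightarrow> infinite {n. x \<in> B n}"
  shows "hausdorff_measure f E = 0"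
proof -
  define h where "h n = (if 0 < diameter (B n) then f (diameter (B n)) else 0)" for n
  have h_nonneg: "0 \<le> h n" for n
    using f_pos by (simp add: h_def less_imp_le)
  have hgauge_eq: "hgauge f (B n) = ennreal (h n)" for n
    by (simp add: hgauge_def h_def)
  have "summable h"
    using finite_sum h_nonneg by (intro summable_suminf_not_top) (auto simp: hgauge_eq)
  have "hausdorff_content f \<delta> E = 0" if "0 < \<delta>" for \<delta>
  proof -
    have "eventually (\<lambda>n. h n < f \<delta>) sequentially"
      using summable_LIMSEQ_zero[OF \<open>summable h\<close>] f_pos[OF that] by (rule order_tendstoD)
    moreover have "diameter (B n) \<le> \<delta>" if "h n < f \<delta>" for n
    proof (rule ccontr)
      assume "\<not> diameter (B n) \<le> \<delta>"
      then have "f \<delta> \<le> h n"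
        using \<open>0 < \<delta>\<close> by (auto simp: h_def intro!: mono_onD[OF f_mono])
      with that show False by simp
    qed
    ultimately obtain N0 where small: "\<And>n. N0 \<le> n \<Longrightarrow> diameter (B n) \<le> \<delta>"
      unfolding eventually_sequentially by blast
    have tail_bound: "hausdorff_content f \<delta> E \<le> ennreal (\<Sum>k. h (k + N))" if "N0 \<le> N" for N
    proof -
      have "hausdorff_content f \<delta> E \<le> (\<Sum>k. hgauge f (B (k + N)))"
        using that small by (intro hausdorff_content_le_tail_sum bounded covered) auto
      also have "\<dots> = ennreal (\<Sum>k. h (k + N))"
        using \<open>summable h\<close> h_nonneg
        by (simp add: hgauge_eq suminf_ennreal2 summable_iff_shift)
      finally show ?thesis .
    qed
    have "(\<lambda>N. ennreal (\<Sum>k. h (k + N))) \<longlonglongrightarrow> ennreal 0"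
      using tendsto_suminf_tail[OF \<open>summable h\<close>] by (rule tendsto_ennrealI)
    then have "hausdorff_content f \<delta> E \<le> 0"
      using tail_bound
      by (intro tendsto_le[OF sequentially_bot _ tendsto_const]) (auto simp: eventually_sequentially)
    then show ?thesis by simp
  qed
  then show ?thesis
    unfolding hausdorff_measure_def by simp
qed

lemma hausdorff_cantelli:
  fixes \<B> :: "nat \<Rightarrow> real set set"
  assumes f_mono: "mono_on {0<..} f" and f_pos: "\<And>r. 0 < r \<Longrightarrow> 0 < f r"
    and finite: "\<And>i. finite (\<B> i)" and bounded: "\<And>i B. B \<in> \<B> i \<Longrightarrow> bounded B"
    and finite_sum: "(\<Sum>i. \<Sum>B\<in>\<B> i. hgauge f B) < \<infinity>"
    and covered: "\<And>x. x \<in> E \<Longrightarrow> infinite {i. x \<in> \<Union>(\<B> i)}"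
  shows "hausdorff_measure f E = 0"
proof -
  have "\<forall>i. \<exists>xs. set xs = \<B> i \<and> distinct xs"
    using finite_distinct_list[OF finite] by blast
  from choice[OF this] obtain L where L: "\<And>i. set (L i) = \<B> i \<and> distinct (L i)"
    by blast
  define C where "C = (\<lambda>(i, k). if k < length (L i) then L i ! k else {})"
  have level_sum: "(\<Sum>k. hgauge f (C (i, k))) = (\<Sum>B\<in>\<B> i. hgauge f B)" for i
  proof -
    have "(\<Sum>k. hgauge f (C (i, k))) = (\<Sum>k<length (L i). hgauge f (L i ! k))"
      by (subst suminf_finite[of "{..<length (L i)}"]) (auto simp: C_def hgauge_def)
    also have "\<dots> = sum_list (map (hgauge f) (L i))"
      by (simp add: sum_list_sum_nth atLeast0LessThan)
    also have "\<dots> = (\<Sum>B\<in>\<B> i. hgauge f B)"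
      using L[of i] by (metis sum.distinct_set_conv_list)
    finally show ?thesis .
  qed
  show ?thesis
  proof (rule hausdorff_measure_zero_if_infinitely_covered[OF f_mono f_pos])
    have "bounded (C (i, k))" for i k
      using L[of i] bounded[of "L i ! k" i] nth_mem[of k "L i"] by (simp add: C_def)
    then show "bounded (C (prod_decode n))" for n
      by (metis surj_pair)
    show "(\<Sum>n. hgauge f (C (prod_decode n))) < \<infinity>"
      using finite_sum by (simp add: suminf_ennreal_2dimen[OF level_sum[symmetric]])
    fix x assume "x \<in> E"
    show "infinite {n. x \<in> C (prod_decode n)}"
      unfolding infinite_nat_iff_unbounded_le
    proof
      fix m
      obtain i B where "m \<le> i" "B \<in> \<B> i" "x \<in> B"
        using covered[OF \<open>x \<in> E\<close>] unfolding infinite_nat_iff_unbounded_le by blast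
      then obtain k where "k < length (L i)" "L i ! k = B"
        using L by (metis in_set_conv_nth)
      then show "\<exists>n\<ge>m. n \<in> {n. x \<in> C (prod_decode n)}"
        using \<open>m \<le> i\<close> \<open>x \<in> B\<close> le_prod_encode_1[of i k]
        by (intro exI[of _ "prod_encode (i, k)"]) (auto simp: C_def)
    qed
  qed
qed

fun digit_prefix :: "nat \<Rightarrow> (nat \<Rightarrow> nat) \<Rightarrow> nat \<Rightarrow> nat" where
  "digit_prefix b d 0 = 0"
| "digit_prefix b d (Suc i) = b * digit_prefix b d i + d i"

lemma sum_digits_eq_digit_prefix:
  assumes "0 < b"
  shows "(\<Sum>k<i. real (d k) / real b ^ Suc k) = real (digit_prefix b d i) / real b ^ i"
  using assms by (induction i) (simp_all add: field_simps)

lemma sums_const_over_powers: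
  assumes "2 \<le> b"
  shows "(\<lambda>k. c / real b ^ Suc k) sums (c / (real b - 1))"
proof -
  have "(\<lambda>k. c / real b * (1 / real b) ^ k) sums (c / real b * (1 / (1 - 1 / real b)))"
    using assms by (intro sums_mult geometric_sums) simp
  moreover have "c / real b * (1 / (1 - 1 / real b)) = c / (real b - 1)"
    using assms by (simp add: field_simps)
  moreover have "(\<lambda>k. c / real b * (1 / real b) ^ k) = (\<lambda>k. c / real b ^ Suc k)"
    by (simp add: field_simps power_divide)
  ultimately show ?thesis
    by metis
qed

lemma digit_expansion_scaled:
  assumes b: "2 \<le> b" and x: "(\<lambda>k. real (d k) / real b ^ Suc k) sums x"
    and lo: "\<And>k. lo \<le> d k" and hi: "\<And>k. d k \<le> hi"
  shows "\<exists>t. x * real b ^ i = real (digit_prefix b d i) + t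
           \<and> real lo / (real b - 1) \<le> t \<and> t \<le> real hi / (real b - 1)"
proof -
  let ?digit = "\<lambda>k. real (d k) / real b ^ Suc k"
  define t where "t = (x - real (digit_prefix b d i) / real b ^ i) * real b ^ i"
  have "(\<lambda>k. ?digit (k + i)) sums (x - (\<Sum>k<i. ?digit k))"
    using x sums_iff_shift[of ?digit i] by simp
  then have "(\<lambda>k. ?digit (k + i)) sums (x - real (digit_prefix b d i) / real b ^ i)"
    using b sum_digits_eq_digit_prefix[of b d i] by simp
  from sums_mult2[OF this, of "real b ^ i"]
  have "(\<lambda>k. ?digit (k + i) * real b ^ i) sums t"
    unfolding t_def .
  moreover have "?digit (k + i) * real b ^ i = real (d (k + i)) / real b ^ Suc k" for k
    using b by (simp add: power_add field_simps)
  ultimately have tail: "(\<lambda>k. real (d (k + i)) / real b ^ Suc k) sums t"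
    by simp
  have "real lo / (real b - 1) \<le> t"
    using lo b by (intro sums_le[OF _ sums_const_over_powers tail] divide_right_mono) auto
  moreover have "t \<le> real hi / (real b - 1)"
    using hi b by (intro sums_le[OF _ tail sums_const_over_powers] divide_right_mono) auto
  moreover have "x * real b ^ i = real (digit_prefix b d i) + t"
    using b by (simp add: t_def field_simps)
  ultimately show ?thesis
    by blast
qed

definition cantor_prefixes :: "nat \<Rightarrow> nat set \<Rightarrow> nat \<Rightarrow> nat set" where
  "cantor_prefixes b D i = {digit_prefix b d i | d. \<forall>k. d k \<in> D}"

lemma cantor_prefixes_0_subset: "cantor_prefixes b D 0 \<subseteq> {0}"
  by (auto simp: cantor_prefixes_def)

lemma cantor_prefixes_Suc_subset:
  "cantor_prefixes b D (Suc i) \<subseteq> (\<lambda>(q, e). b * q + e) ` (cantor_prefixes b D i \<times> D)"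
  by (force simp: cantor_prefixes_def)

lemma finite_cantor_prefixes:
  assumes "finite D"
  shows "finite (cantor_prefixes b D i)"
proof (induction i)
  case 0
  show ?case
    using cantor_prefixes_0_subset by (rule finite_subset) simp
next
  case (Suc i)
  show ?case
    using cantor_prefixes_Suc_subset Suc assms by (metis finite_SigmaI finite_imageI finite_subset)
qed

lemma card_cantor_prefixes_le:
  assumes "finite D"
  shows "card (cantor_prefixes b D i) \<le> card D ^ i"
proof (induction i)
  case 0
  have "card (cantor_prefixes b D 0) \<le> card {0::nat}"
    using cantor_prefixes_0_subset by (rule card_mono[rotated]) simp
  then show ?case
    by simp
next
  case (Suc i)
  have "card (cantor_prefixes b D (Suc i))
      \<le> card ((\<lambda>(q, e). b * q + e) ` (cantor_prefixes b D i \<times> D))"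
    using cantor_prefixes_Suc_subset assms finite_cantor_prefixes by (intro card_mono) auto
  also have "\<dots> \<le> card (cantor_prefixes b D i \<times> D)"
    using assms finite_cantor_prefixes by (intro card_image_le) simp
  also have "\<dots> = card (cantor_prefixes b D i) * card D"
    by (rule card_cartesian_product)
  also have "\<dots> \<le> card D ^ Suc i"
    using Suc by (simp add: mult.commute)
  finally show ?case .
qed

definition grid_margin :: "nat \<Rightarrow> nat set \<Rightarrow> real" where
  "grid_margin b D = real (min (Min D) (b - 1 - Max D)) / (real b - 1)"

lemma cantor_set_scaled_split:
  assumes b: "2 \<le> b" and D: "D \<subseteq> {0..b-1}" and x: "x \<in> cantor_set b D"
  shows "\<exists>q\<in>cantor_prefixes b D i. \<exists>t. x * real b ^ i = real q + t
           \<and> grid_margin b D \<le> t \<and> t \<le> 1 - grid_margin b D"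
proof -
  obtain d where d: "\<And>k. d k \<in> D" and sums: "(\<lambda>k. real (d k) / real b ^ Suc k) sums x"
    using x unfolding cantor_set_def by blast
  have "finite D"
    using D by (rule finite_subset) simp
  moreover have "D \<noteq> {}"
    using d by blast
  ultimately have "Min D \<le> d k" "d k \<le> Max D" "Max D \<le> b - 1" for k
    using d D by auto
  then obtain t where t: "x * real b ^ i = real (digit_prefix b d i) + t"
      "real (Min D) / (real b - 1) \<le> t" "t \<le> real (Max D) / (real b - 1)"
    using digit_expansion_scaled[OF b sums] by blast
  have "grid_margin b D \<le> real (Min D) / (real b - 1)"
    using b by (simp add: grid_margin_def divide_right_mono)
  moreover have "real (Max D) / (real b - 1) \<le> 1 - grid_margin b D"
  proof -
    have "min (Min D) (b - 1 - Max D) + Max D + 1 \<le> b"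
      using b \<open>Max D \<le> b - 1\<close> by linarith
    then have "real (min (Min D) (b - 1 - Max D)) + real (Max D) + 1 \<le> real b"
      by (metis of_nat_1 of_nat_add of_nat_le_iff)
    then have "(real (Max D) + real (min (Min D) (b - 1 - Max D))) / (real b - 1) \<le> 1"
      using b by (simp add: divide_le_eq)
    then show ?thesis
      unfolding grid_margin_def add_divide_distrib by linarith
  qed
  moreover have "digit_prefix b d i \<in> cantor_prefixes b D i"
    using d by (auto simp: cantor_prefixes_def)
  ultimately show ?thesis
    using t by fastforce
qed

lemma cantor_set_grid_dist:
  assumes "2 \<le> b" "D \<subseteq> {0..b-1}" "x \<in> cantor_set b D"
  shows "grid_margin b D / real b ^ i \<le> \<bar>x - real_of_int p / real b ^ i\<bar>"
proof -
  obtain q t where t: "x * real b ^ i = real q + t" "grid_margin b D \<le> t" "t \<le> 1 - grid_margin b D"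
    using cantor_set_scaled_split[OF assms] by blast
  have "grid_margin b D \<le> \<bar>x * real b ^ i - real_of_int p\<bar>"
    using t by (cases "p \<le> int q") auto
  also have "\<dots> = \<bar>x - real_of_int p / real b ^ i\<bar> * real b ^ i"
    using assms(1) by (simp add: field_simps flip: abs_mult)
  finally show ?thesis
    using assms(1) by (simp add: divide_le_eq)
qed

(* A point of C(b,D) in the cell [q, q+1]/b^i keeps distance grid_margin b D / b^i from both
   endpoints, and if it is within R of some grid point it is within R of one of the endpoints. *)
definition near_grid_cover :: "nat \<Rightarrow> nat set \<Rightarrow> nat \<Rightarrow> real \<Rightarrow> real set set" where
  "near_grid_cover b D i R =
     (\<lambda>q. {(real q + grid_margin b D) / real b ^ i .. real q / real b ^ i + R}) ` cantor_prefixes b D i \<union>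
     (\<lambda>q. {(real q + 1) / real b ^ i - R .. (real q + 1 - grid_margin b D) / real b ^ i}) ` cantor_prefixes b D i"

lemma cantor_set_near_grid_subset:
  assumes "2 \<le> b" "D \<subseteq> {0..b-1}" "x \<in> cantor_set b D"
    and near: "\<bar>x - real_of_int p / real b ^ i\<bar> < R"
  shows "x \<in> \<Union>(near_grid_cover b D i R)"
proof -
  obtain q t where q: "q \<in> cantor_prefixes b D i" and t: "x * real b ^ i = real q + t"
      "grid_margin b D \<le> t" "t \<le> 1 - grid_margin b D"
    using cantor_set_scaled_split[OF assms(1-3)] by blast
  have bpos: "0 < real b ^ i" using assms(1) by simp
  have x_eq: "x = (real q + t) / real b ^ i"
    using t(1) bpos by (simp add: field_simps)
  show ?thesis
  proof (cases "p \<le> int q")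
    case True
    then have "real_of_int p / real b ^ i \<le> real q / real b ^ i"
      using bpos by (intro divide_right_mono) auto
    then have "x - real q / real b ^ i \<le> \<bar>x - real_of_int p / real b ^ i\<bar>"
      by linarith
    then have "x \<in> {(real q + grid_margin b D) / real b ^ i .. real q / real b ^ i + R}"
      using near t(2) bpos by (auto simp: x_eq divide_right_mono)
    then show ?thesis
      using q by (auto simp: near_grid_cover_def)
  next
    case False
    then have "(real q + 1) / real b ^ i \<le> real_of_int p / real b ^ i"
      using bpos by (intro divide_right_mono) auto
    then have "(real q + 1) / real b ^ i - x \<le> \<bar>x - real_of_int p / real b ^ i\<bar>"
      by linarith
    then have "x \<in> {(real q + 1) / real b ^ i - R .. (real q + 1 - grid_margin b D) / real b ^ i}"
      using near t(3) bpos by (auto simp: x_eq divide_right_mono)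
    then show ?thesis
      using q by (auto simp: near_grid_cover_def)
  qed
qed

lemma finite_near_grid_cover:
  "finite D \<Longrightarrow> finite (near_grid_cover b D i R)"
  by (simp add: near_grid_cover_def finite_cantor_prefixes)

lemma card_near_grid_cover_le:
  assumes "finite D"
  shows "card (near_grid_cover b D i R) \<le> 2 * card D ^ i"
proof -
  have "card (near_grid_cover b D i R)
      \<le> card (cantor_prefixes b D i) + card (cantor_prefixes b D i)"
    unfolding near_grid_cover_def by (intro card_Un_le[THEN order_trans] add_mono card_image_le)
      (simp_all add: assms finite_cantor_prefixes)
  then show ?thesis
    using card_cantor_prefixes_le[OF assms, of b i] by simp
qed

lemma bounded_interval_diameter_le:
  fixes lo hi :: real
  assumes "hi - lo \<le> r" "0 \<le> r"
  shows "bounded {lo..hi} \<and> diameter {lo..hi} \<le> r"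
  using assms by simp

lemma near_grid_cover_diameter_le:
  assumes "grid_margin b D / real b ^ i \<le> R" "B \<in> near_grid_cover b D i R"
  shows "bounded B \<and> diameter B \<le> R - grid_margin b D / real b ^ i"
  using assms(2) unfolding near_grid_cover_def
  by (elim UnE imageE ssubst, intro bounded_interval_diameter_le)
    (simp_all add: assms(1) add_divide_distrib diff_divide_distrib)

lemma near_grid_cover_hgauge_sum_le:
  assumes f: "mono_on {0<..} f" and "finite D" and margin: "grid_margin b D / real b ^ i < R"
  shows "(\<Sum>B\<in>near_grid_cover b D i R. hgauge f B)
           \<le> ennreal (2 * real (card D) ^ i * f (R - grid_margin b D / real b ^ i))"
proof -
  let ?r = "R - grid_margin b D / real b ^ i"
  have "hgauge f B \<le> ennreal (f ?r)" if "B \<in> near_grid_cover b D i R" for B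
    using near_grid_cover_diameter_le[OF _ that] margin by (intro hgauge_le_of_diameter_le[OF f]) simp_all
  then have "(\<Sum>B\<in>near_grid_cover b D i R. hgauge f B)
      \<le> of_nat (card (near_grid_cover b D i R)) * ennreal (f ?r)"
    by (rule sum_bounded_above)
  also have "\<dots> \<le> of_nat (2 * card D ^ i) * ennreal (f ?r)"
    using card_near_grid_cover_le[OF \<open>finite D\<close>, of b i R]
    by (intro mult_right_mono) (simp_all only: of_nat_le_iff zero_le)
  also have "\<dots> = ennreal (real (2 * card D ^ i)) * ennreal (f ?r)"
    by (simp only: ennreal_of_nat_eq_real_of_nat)
  also have "\<dots> = ennreal (2 * real (card D) ^ i * f ?r)"
    by (subst ennreal_mult'[symmetric]) simp_all
  finally show ?thesis .
qed

lemma finite_sublevel_if_mono_unbounded: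
  fixes a :: "nat \<Rightarrow> nat"
  assumes mono: "\<forall>n\<ge>1. a n \<le> a (Suc n)" and unbounded: "\<forall>M. \<exists>n\<ge>1. a n > M"
  shows "finite {n. a n \<le> M}"
proof -
  obtain n0 where n0: "1 \<le> n0" "M < a n0"
    using unbounded by blast
  have "a n0 \<le> a n" if "n0 \<le> n" for n
    using that by (induction n rule: dec_induct) (use mono n0 in \<open>auto intro: order_trans\<close>)
  then have "n < n0" if "a n \<le> M" for n
    using that n0(2) by (meson leI order.strict_trans2 not_le)
  then have "{n. a n \<le> M} \<subseteq> {..<n0}"
    by blast
  then show ?thesis
    by (rule finite_subset) simp
qed

lemma psi_le_psi_A:
  assumes "finite {n. a n = a k}" "1 \<le> k"
  shows "\<psi> k \<le> psi_A a \<psi> (a k)"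
proof -
  have "finite {\<psi> n | n. 1 \<le> n \<and> a n = a k}"
    using assms(1) by (auto simp: setcompr_eq_image)
  then show ?thesis
    unfolding psi_A_def using assms(2) by (intro Max_ge) auto
qed

lemma W_set_infinitely_near_grid:
  assumes b: "0 < b" and fin: "\<And>M. finite {n. a n \<le> M}" and x: "x \<in> W_set b a \<psi>"
  shows "infinite {i \<in> index_set a. \<exists>p::nat. \<bar>x - real p / real b ^ i\<bar> < psi_A a \<psi> i}"
    (is "infinite ?L")
proof
  assume "finite ?L"
  then obtain M where M: "?L \<subseteq> {..<M}"
    using finite_nat_bounded by blast
  define bound where "bound n = nat \<lceil>(x + \<psi> n) * real b ^ a n\<rceil>" for n
  have "{(p, n). 1 \<le> p \<and> 1 \<le> n \<and> \<bar>x - real p / real b ^ a n\<bar> < \<psi> n}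
      \<subseteq> (\<Union>n\<in>{n. a n \<le> M}. {..bound n} \<times> {n})"
  proof safe
    fix p n :: nat
    assume "1 \<le> n" and near: "\<bar>x - real p / real b ^ a n\<bar> < \<psi> n"
    have "finite {m. a m = a n}"
      using fin[of "a n"] by (rule finite_subset[rotated]) auto
    then have "\<psi> n \<le> psi_A a \<psi> (a n)"
      using \<open>1 \<le> n\<close> by (rule psi_le_psi_A)
    then have "\<bar>x - real p / real b ^ a n\<bar> < psi_A a \<psi> (a n)"
      using near by linarith
    then have "a n \<in> ?L"
      using \<open>1 \<le> n\<close> by (auto simp: index_set_def)
    moreover have "real p < (x + \<psi> n) * real b ^ a n"
      using near b by (simp add: field_simps)
    ultimately show "(p, n) \<in> (\<Union>n\<in>{n. a n \<le> M}. {..bound n} \<times> {n})"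
      using M unfolding bound_def by (auto intro!: le_nat_iff[THEN iffD2] simp: le_ceiling_iff)
  qed
  moreover have "finite (\<Union>n\<in>{n. a n \<le> M}. {..bound n} \<times> {n})"
    using fin by (intro finite_UN_I) auto
  ultimately have "finite {(p, n). 1 \<le> p \<and> 1 \<le> n \<and> \<bar>x - real p / real b ^ a n\<bar> < \<psi> n}"
    by (rule finite_subset)
  with x show False
    by (simp add: W_set_def)
qed

definition W_cover :: "nat \<Rightarrow> nat set \<Rightarrow> (nat \<Rightarrow> nat) \<Rightarrow> (nat \<Rightarrow> real) \<Rightarrow> nat \<Rightarrow> real set set" where
  "W_cover b D a \<psi> i =
     (if i \<in> index_set a \<and> grid_margin b D / real b ^ i < psi_A a \<psi> i
      then near_grid_cover b D i (psi_A a \<psi> i) else {})"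

lemma finite_W_cover: "finite D \<Longrightarrow> finite (W_cover b D a \<psi> i)"
  by (simp add: W_cover_def finite_near_grid_cover)

lemma W_cover_bounded: "B \<in> W_cover b D a \<psi> i \<Longrightarrow> bounded B"
  using near_grid_cover_diameter_le[of b D i "psi_A a \<psi> i" B]
  by (auto simp: W_cover_def split: if_splits)

lemma W_cover_infinitely_often:
  assumes b: "2 \<le> b" and D: "D \<subseteq> {0..b-1}" and fin: "\<And>M. finite {n. a n \<le> M}"
    and x: "x \<in> W_set b a \<psi> \<inter> cantor_set b D"
  shows "infinite {i. x \<in> \<Union>(W_cover b D a \<psi> i)}"
proof -
  have "{i \<in> index_set a. \<exists>p::nat. \<bar>x - real p / real b ^ i\<bar> < psi_A a \<psi> i}
      \<subseteq> {i. x \<in> \<Union>(W_cover b D a \<psi> i)}"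
  proof safe
    fix i p
    assume i: "i \<in> index_set a" and near: "\<bar>x - real p / real b ^ i\<bar> < psi_A a \<psi> i"
    have "grid_margin b D / real b ^ i < psi_A a \<psi> i"
      using cantor_set_grid_dist[OF b D, of x i "int p"] near x by simp
    then show "x \<in> \<Union>(W_cover b D a \<psi> i)"
      using cantor_set_near_grid_subset[OF b D, of x "int p"] i near x
      by (simp add: W_cover_def)
  qed
  moreover have "infinite {i \<in> index_set a. \<exists>p::nat. \<bar>x - real p / real b ^ i\<bar> < psi_A a \<psi> i}"
    using x b fin by (intro W_set_infinitely_near_grid) auto
  ultimately show ?thesis
    by (rule infinite_super)
qed

lemma summable_on_imp_summable_extend_zero:
  fixes g :: "nat \<Rightarrow> real"
  assumes "g summable_on S" and "\<And>i. i \<in> S \<Longrightarrow> 0 \<le> g i"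
  shows "summable (\<lambda>i. if i \<in> S then g i else 0)"
proof -
  have "(\<lambda>i. if i \<in> S then g i else 0) summable_on UNIV"
    using assms(1) by (rule summable_on_cong_neutral[THEN iffD1, rotated 3]) auto
  then show ?thesis
    using assms(2) by (simp add: summable_on_UNIV_nonneg_real_iff)
qed

lemma W_cover_hgauge_suminf_finite:
  assumes f_mono: "mono_on {0<..} f" and f_pos: "\<And>r. 0 < r \<Longrightarrow> 0 < f r" and "finite D"
    and sum: "(\<lambda>i. f (psi_A a \<psi> i - grid_margin b D / real b ^ i) * real (card D) ^ i)
                summable_on {i \<in> index_set a. grid_margin b D / real b ^ i < psi_A a \<psi> i}"
  shows "(\<Sum>i. \<Sum>B\<in>W_cover b D a \<psi> i. hgauge f B) < \<infinity>"
proof -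
  define S where "S = {i \<in> index_set a. grid_margin b D / real b ^ i < psi_A a \<psi> i}"
  define g where
    "g i = (if i \<in> S then f (psi_A a \<psi> i - grid_margin b D / real b ^ i) * real (card D) ^ i else 0)"
    for i
  have g_nonneg: "0 \<le> g i" for i
    using f_pos by (simp add: g_def S_def less_imp_le)
  have "summable g"
    unfolding g_def using sum f_pos
    by (intro summable_on_imp_summable_extend_zero) (auto simp: S_def less_imp_le)
  have "(\<Sum>B\<in>W_cover b D a \<psi> i. hgauge f B) \<le> ennreal (2 * g i)" for i
  proof (cases "i \<in> S")
    case True
    then have "(\<Sum>B\<in>W_cover b D a \<psi> i. hgauge f B)
        \<le> ennreal (2 * real (card D) ^ i * f (psi_A a \<psi> i - grid_margin b D / real b ^ i))"
      using near_grid_cover_hgauge_sum_le[OF f_mono \<open>finite D\<close>] by (simp add: W_cover_def S_def)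
    also have "\<dots> = ennreal (2 * g i)"
      using True by (simp add: g_def mult_ac)
    finally show ?thesis .
  next
    case False
    then have "W_cover b D a \<psi> i = {}"
      unfolding W_cover_def S_def by auto
    then show ?thesis
      by simp
  qed
  then have "(\<Sum>i. \<Sum>B\<in>W_cover b D a \<psi> i. hgauge f B) \<le> (\<Sum>i. ennreal (2 * g i))"
    by (intro suminf_le) auto
  also have "\<dots> < \<infinity>"
    using \<open>summable g\<close> g_nonneg by (simp add: less_top ennreal_suminf_neq_top summable_mult)
  finally show ?thesis .
qed

lemma powr_mult_log_eq_power:
  fixes b c :: real
  assumes "1 < b" "0 < c"
  shows "b powr (real i * log b c) = c ^ i"
proof -
  have "b powr (real i * log b c) = (b powr log b c) powr real i"
    by (simp only: powr_powr mult.commute)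
  also have "\<dots> = c ^ i"
    using assms by (simp add: powr_realpow)
  finally show ?thesis .
qed

theorem lemma4p2:
  fixes b :: nat and D :: "nat set" and a :: "nat \<Rightarrow> nat"
    and f :: "real \<Rightarrow> real" and \<psi> :: "nat \<Rightarrow> real"
  assumes b: "b \<ge> 3"
    and D: "D \<subseteq> {0..b-1}" "2 \<le> card D" "card D \<le> b - 1"
    and a_pos: "\<forall>n\<ge>1. a n > 0"
    and a_mono: "\<forall>n\<ge>1. a n \<le> a (Suc n)"
    and a_unbdd: "\<forall>M. \<exists>n\<ge>1. a n > M"
    and f: "dimension_function f"
    and f_mono: "mono_on {0<..} (\<lambda>r. r powr (- log b (card D)) * f r) \<or>
                 antimono_on {0<..} (\<lambda>r. r powr (- log b (card D)) * f r)"
    and \<psi>: "\<forall>n\<ge>1. \<psi> n > 0"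
    and sum: "(\<lambda>i. f (psi_A a \<psi> i - real (min (Min D) (b - 1 - Max D)) / ((real b - 1) * real b ^ i))
                  * real b powr (real i * log b (card D)))
              summable_on {i \<in> index_set a.
                 psi_A a \<psi> i > real (min (Min D) (b - 1 - Max D)) / ((real b - 1) * real b ^ i)}"
  shows "hausdorff_measure f (W_set b a \<psi> \<inter> cantor_set b D) = 0"
proof -
  have b2: "2 \<le> b"
    using b by simp
  have finite_D: "finite D"
    using D(1) by (rule finite_subset) simp
  have f_incr: "mono_on {0<..} f" and f_pos: "\<And>r. 0 < r \<Longrightarrow> 0 < f r"
    using f by (auto simp: dimension_function_def)
  have "real (min (Min D) (b - 1 - Max D)) / ((real b - 1) * real b ^ i)
      = grid_margin b D / real b ^ i"
    and "real b powr (real i * log b (card D)) = real (card D) ^ i" for i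
    using b D(2) by (simp_all add: grid_margin_def powr_mult_log_eq_power)
  with sum have "(\<lambda>i. f (psi_A a \<psi> i - grid_margin b D / real b ^ i) * real (card D) ^ i)
      summable_on {i \<in> index_set a. grid_margin b D / real b ^ i < psi_A a \<psi> i}"
    by simp
  from W_cover_hgauge_suminf_finite[OF f_incr f_pos finite_D this]
  have "(\<Sum>i. \<Sum>B\<in>W_cover b D a \<psi> i. hgauge f B) < \<infinity>" .
  moreover have "infinite {i. x \<in> \<Union>(W_cover b D a \<psi> i)}"
    if "x \<in> W_set b a \<psi> \<inter> cantor_set b D" for x
    using that finite_sublevel_if_mono_unbounded[OF a_mono a_unbdd]
    by (intro W_cover_infinitely_often[OF b2 D(1)])
  ultimately show ?thesis
    using finite_W_cover[OF finite_D] W_cover_bounded by (intro hausdorff_cantelli[OF f_incr f_pos])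
qed

end
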